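(* For $\vec S_n(\tau),\bar{\vec S}_n(\tau)\in\mathbb{C}^m$, $v_n(\tau)\in\mathbb{C}$ ($n\in\mathbb{Z}$), write $Q_n:=\langle\vec S_{n+1},\bar{\vec S}_n\rangle+\langle\vec S_n,\bar{\vec S}_{n+1}\rangle$. Consider the spatial linear problem for a scalar $\psi_n$ and vectors $\vec\phi_n,\vec\chi_n\in\mathbb{C}^m$ with constant spectral parameter $\lambda$: \begin{align*} v_n(\psi_{n+1}+\psi_{n-1})&=\lambda\psi_n-\langle\vec S_n,\vec\phi_n\rangle-\langle\vec\chi_n,\bar{\vec S}_n\rangle,\\ \vec\phi_{n+1}-\vec\phi_n&=\tfrac{\mathrm{i}}{2}\bar{\vec S}_n(\psi_{n+1}+\psi_{n-1}),\\ \vec\chi_{n+1}+\vec\chi_n&=\tfrac{\mathrm{i}}{2}\vec S_n(\psi_{n+1}+\psi_{n-1}), \end{align*} together with the time evolution \begin{align*} \psi_{n,\tau}={}&v_nv_{n+1}(\psi_{n+2}+\psi_n)-v_nv_{n-1}(\psi_n+\psi_{n-2})+\tfrac{\mathrm{i}}{2}v_n(Q_n+Q_{n-1})(\psi_{n+1}+\psi_{n-1}),\\ \vec\phi_{n,\tau}={}&\tfrac{\mathrm{i}}{2}v_nv_{n+1}\bar{\vec S}_{n-1}(\psi_{n+2}+\psi_n)+\tfrac{\mathrm{i}}{2}v_nv_{n-1}\bar{\vec S}_{n-2}(\psi_{n+1}+\psi_{n-1})\\ &+\tfrac{\mathrm{i}}{2}v_nv_{n-1}\bar{\vec S}_{n+1}(\psi_n+\psi_{n-2})+\tfrac{\mathrm{i}}{2}v_{n-1}v_{n-2}\bar{\vec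 S}_n(\psi_{n-1}+\psi_{n-3})\\ &-\tfrac14 v_n(Q_n+Q_{n-1})\bar{\vec S}_{n-1}(\psi_{n+1}+\psi_{n-1})+\tfrac14 v_{n-1}(Q_{n-1}+Q_{n-2})\bar{\vec S}_n(\psi_n+\psi_{n-2}),\\ \vec\chi_{n,\tau}={}&\tfrac{\mathrm{i}}{2}v_nv_{n+1}\vec S_{n-1}(\psi_{n+2}+\psi_n)-\tfrac{\mathrm{i}}{2}v_nv_{n-1}\vec S_{n-2}(\psi_{n+1}+\psi_{n-1})\\ &+\tfrac{\mathrm{i}}{2}v_nv_{n-1}\vec S_{n+1}(\psi_n+\psi_{n-2})-\tfrac{\mathrm{i}}{2}v_{n-1}v_{n-2}\vec S_n(\psi_{n-1}+\psi_{n-3})\\ &-\tfrac14 v_n(Q_n+Q_{n-1})\vec S_{n-1}(\psi_{n+1}+\psi_{n-1})-\tfrac14 v_{n-1}(Q_{n-1}+Q_{n-2})\vec S_n(\psi_n+\psi_{n-2}). \end{align*} Then the compatibility condition of these overdetermined linear equations (identically in $\psi_n,\vec\phi_n,\vec\chi_n$, after eliminating $\tau$-derivatives and $\lambda$) is equivalent to the system \begin{align*} \vec S_{n,\tau}={}&v_nv_{n+1}(\vec S_{n+2}+\vec S_n)-v_nv_{n-1}(\vec S_n+\vec S_{n-2})+\tfrac{\mathrm{i}}{2}v_n(Q_n+Q_{n-1})(\vec S_{n+1}+\vec S_{n-1}),\\ \bar{\vec S}_{n,\tau}={}&v_nv_{n+1}(\bar{\vec S}_{n+2}+\bar{\vec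 S}_n)-v_nv_{n-1}(\bar{\vec S}_n+\bar{\vec S}_{n-2})-\tfrac{\mathrm{i}}{2}v_n(Q_n+Q_{n-1})(\bar{\vec S}_{n+1}+\bar{\vec S}_{n-1}),\\ v_{n,\tau}={}&2v_n^2(v_{n+1}-v_{n-1})+\tfrac{\mathrm{i}}{2}v_nv_{n+1}\big(\langle\vec S_{n+2},\bar{\vec S}_n\rangle-\langle\vec S_n,\bar{\vec S}_{n+2}\rangle\big)\\ &-\tfrac{\mathrm{i}}{2}v_nv_{n-1}\big(\langle\vec S_n,\bar{\vec S}_{n-2}\rangle-\langle\vec S_{n-2},\bar{\vec S}_n\rangle\big)-\tfrac14 v_n(Q_n+Q_{n-1})(Q_n-Q_{n-1}). \end{align*}
   Context: $n\in\mathbb{Z}$ is the lattice site, $\tau$ a time variable, subscript $\tau$ denotes $\partial/\partial\tau$. $\langle\vec a,\vec b\rangle=\sum_{i=1}^m a^{(i)}b^{(i)}$ is the standard bilinear scalar product (no complex conjugation). The product of a scalar and a column vector is written in either order. $\bar{\vec S}_n$ is an independent vector variable. *)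

theory Defs
  imports "HOL-Analysis.Analysis"
begin

definition bil :: "complex ^ 'm \<Rightarrow> complex ^ 'm \<Rightarrow> complex" where
  "bil a b = (\<Sum>i\<in>UNIV. a $ i * b $ i)"

text \<open>All following definitions work on a snapshot at a fixed time:
  S, Sb :: int => complex^m, v :: int => complex.\<close>

definition Qf :: "(int \<Rightarrow> complex ^ 'm) \<Rightarrow> (int \<Rightarrow> complex ^ 'm) \<Rightarrow> int \<Rightarrow> complex" where
  "Qf S Sb n = bil (S (n+1)) (Sb n) + bil (S n) (Sb (n+1))"

definition spatial ::
  "(int \<Rightarrow> complex ^ 'm) \<Rightarrow> (int \<Rightarrow> complex ^ 'm) \<Rightarrow> (int \<Rightarrow> complex) \<Rightarrow> complex
   \<Rightarrow> (int \<Rightarrow> complex) \<Rightarrow> (int \<Rightarrow> complex ^ 'm) \<Rightarrow> (int \<Rightarrow> complex ^ 'm) \<Rightarrow> bool" where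
  "spatial S Sb v lam psi phi chi \<longleftrightarrow> (\<forall>n.
     v n * (psi (n+1) + psi (n-1)) = lam * psi n - bil (S n) (phi n) - bil (chi n) (Sb n)
   \<and> phi (n+1) - phi n = (\<i>/2 * (psi (n+1) + psi (n-1))) *s Sb n
   \<and> chi (n+1) + chi n = (\<i>/2 * (psi (n+1) + psi (n-1))) *s S n)"

definition Tpsi ::
  "(int \<Rightarrow> complex ^ 'm) \<Rightarrow> (int \<Rightarrow> complex ^ 'm) \<Rightarrow> (int \<Rightarrow> complex) \<Rightarrow> (int \<Rightarrow> complex) \<Rightarrow> int \<Rightarrow> complex" where
  "Tpsi S Sb v psi n =
     v n * v (n+1) * (psi (n+2) + psi n) - v n * v (n-1) * (psi n + psi (n-2))
     + \<i>/2 * v n * (Qf S Sb n + Qf S Sb (n-1)) * (psi (n+1) + psi (n-1))"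

definition Tphi ::
  "(int \<Rightarrow> complex ^ 'm) \<Rightarrow> (int \<Rightarrow> complex ^ 'm) \<Rightarrow> (int \<Rightarrow> complex) \<Rightarrow> (int \<Rightarrow> complex) \<Rightarrow> int \<Rightarrow> complex ^ 'm" where
  "Tphi S Sb v psi n =
       (\<i>/2 * v n * v (n+1) * (psi (n+2) + psi n)) *s Sb (n-1)
     + (\<i>/2 * v n * v (n-1) * (psi (n+1) + psi (n-1))) *s Sb (n-2)
     + (\<i>/2 * v n * v (n-1) * (psi n + psi (n-2))) *s Sb (n+1)
     + (\<i>/2 * v (n-1) * v (n-2) * (psi (n-1) + psi (n-3))) *s Sb n
     - (1/4 * v n * (Qf S Sb n + Qf S Sb (n-1)) * (psi (n+1) + psi (n-1))) *s Sb (n-1)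
     + (1/4 * v (n-1) * (Qf S Sb (n-1) + Qf S Sb (n-2)) * (psi n + psi (n-2))) *s Sb n"

definition Tchi ::
  "(int \<Rightarrow> complex ^ 'm) \<Rightarrow> (int \<Rightarrow> complex ^ 'm) \<Rightarrow> (int \<Rightarrow> complex) \<Rightarrow> (int \<Rightarrow> complex) \<Rightarrow> int \<Rightarrow> complex ^ 'm" where
  "Tchi S Sb v psi n =
       (\<i>/2 * v n * v (n+1) * (psi (n+2) + psi n)) *s S (n-1)
     - (\<i>/2 * v n * v (n-1) * (psi (n+1) + psi (n-1))) *s S (n-2)
     + (\<i>/2 * v n * v (n-1) * (psi n + psi (n-2))) *s S (n+1)
     - (\<i>/2 * v (n-1) * v (n-2) * (psi (n-1) + psi (n-3))) *s S n
     - (1/4 * v n * (Qf S Sb n + Qf S Sb (n-1)) * (psi (n+1) + psi (n-1))) *s S (n-1)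
     - (1/4 * v (n-1) * (Qf S Sb (n-1) + Qf S Sb (n-2)) * (psi n + psi (n-2))) *s S n"

text \<open>Compatibility condition at one time instant: S', Sb', v' are the tau-derivatives.
  Differentiating the spatial equations in tau and replacing psi_tau, phi_tau, chi_tau by
  the time-evolution right-hand sides, the resulting equations must hold for every
  spectral parameter and every solution (psi, phi, chi) of the spatial problem.\<close>
definition compatible ::
  "(int \<Rightarrow> complex ^ 'm) \<Rightarrow> (int \<Rightarrow> complex ^ 'm) \<Rightarrow> (int \<Rightarrow> complex)
   \<Rightarrow> (int \<Rightarrow> complex ^ 'm) \<Rightarrow> (int \<Rightarrow> complex ^ 'm) \<Rightarrow> (int \<Rightarrow> complex) \<Rightarrow> bool" where
  "compatible S Sb v S' Sb' v' \<longleftrightarrow>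
    (\<forall>lam psi phi chi. spatial S Sb v lam psi phi chi \<longrightarrow>
      (let T = Tpsi S Sb v psi; P = Tphi S Sb v psi; X = Tchi S Sb v psi in
       \<forall>n.
         v' n * (psi (n+1) + psi (n-1)) + v n * (T (n+1) + T (n-1))
           = lam * T n - bil (S' n) (phi n) - bil (S n) (P n)
             - bil (X n) (Sb n) - bil (chi n) (Sb' n)
       \<and> P (n+1) - P n = (\<i>/2 * (psi (n+1) + psi (n-1))) *s Sb' n
                         + (\<i>/2 * (T (n+1) + T (n-1))) *s Sb n
       \<and> X (n+1) + X n = (\<i>/2 * (psi (n+1) + psi (n-1))) *s S' n
                         + (\<i>/2 * (T (n+1) + T (n-1))) *s S n))"

end

theory Submission
  imports Defs
begin

text \<open>The compatibility equations are linear in \<open>S'\<close>, \<open>Sb'\<close>, \<open>v'\<close>. With the claimed flow the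
  \<open>phi\<close>- and \<open>chi\<close>-equations are polynomial identities, and the \<open>psi\<close>-equation becomes one after
  using the spatial problem to eliminate \<open>lam * psi k\<close> for \<open>\<bar>k - n\<bar> \<le> 2\<close> and to express
  \<open>phi k\<close>, \<open>chi k\<close> through \<open>phi n\<close>, \<open>chi n\<close>. Conversely, \<open>S' n\<close>, \<open>Sb' n\<close> and \<open>v' n\<close> enter
  with the common factor \<open>psi (n+1) + psi (n-1)\<close>, so they are forced by a single solution on
  which this factor is nonzero. Since \<open>v\<close> never vanishes, the spatial problem is an invertible
  first-order recurrence in \<open>(psi (k-1), psi k, phi k, chi k)\<close>, so such a solution exists.\<close>

lemma bil_add_left: "bil (a + b) c = bil a c + bil b c"
  by (simp add: bil_def sum.distrib algebra_simps)
lemma bil_add_right: "bil a (b + c) = bil a b + bil a c"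
  by (simp add: bil_def sum.distrib algebra_simps)
lemma bil_diff_left: "bil (a - b) c = bil a c - bil b c"
  by (simp add: bil_def sum_subtractf algebra_simps)
lemma bil_diff_right: "bil a (b - c) = bil a b - bil a c"
  by (simp add: bil_def sum_subtractf algebra_simps)
lemma bil_smult_left: "bil (x *s a) b = x * bil a b"
  by (simp add: bil_def sum_distrib_left algebra_simps)
lemma bil_smult_right: "bil a (x *s b) = x * bil a b"
  by (simp add: bil_def sum_distrib_left algebra_simps)
lemma bil_zero_left [simp]: "bil 0 b = 0"
  by (simp add: bil_def)
lemma bil_zero_right [simp]: "bil a 0 = 0"
  by (simp add: bil_def)

lemmas bil_linear = bil_add_left bil_add_right bil_diff_left bil_diff_right
  bil_smult_left bil_smult_right

definition S_evol :: "(int \<Rightarrow> complex ^ 'm) \<Rightarrow> (int \<Rightarrow> complex ^ 'm) \<Rightarrow> (int \<Rightarrow> complex) \<Rightarrow> int \<Rightarrow> complex ^ 'm" where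
  "S_evol S Sb v n = (v n * v (n+1)) *s (S (n+2) + S n) - (v n * v (n-1)) *s (S n + S (n-2))
     + (\<i>/2 * v n * (Qf S Sb n + Qf S Sb (n-1))) *s (S (n+1) + S (n-1))"

definition Sb_evol :: "(int \<Rightarrow> complex ^ 'm) \<Rightarrow> (int \<Rightarrow> complex ^ 'm) \<Rightarrow> (int \<Rightarrow> complex) \<Rightarrow> int \<Rightarrow> complex ^ 'm" where
  "Sb_evol S Sb v n = (v n * v (n+1)) *s (Sb (n+2) + Sb n) - (v n * v (n-1)) *s (Sb n + Sb (n-2))
     - (\<i>/2 * v n * (Qf S Sb n + Qf S Sb (n-1))) *s (Sb (n+1) + Sb (n-1))"

definition v_evol :: "(int \<Rightarrow> complex ^ 'm) \<Rightarrow> (int \<Rightarrow> complex ^ 'm) \<Rightarrow> (int \<Rightarrow> complex) \<Rightarrow> int \<Rightarrow> complex" where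
  "v_evol S Sb v n = 2 * (v n)^2 * (v (n+1) - v (n-1))
     + \<i>/2 * v n * v (n+1) * (bil (S (n+2)) (Sb n) - bil (S n) (Sb (n+2)))
     - \<i>/2 * v n * v (n-1) * (bil (S n) (Sb (n-2)) - bil (S (n-2)) (Sb n))
     - 1/4 * v n * (Qf S Sb n + Qf S Sb (n-1)) * (Qf S Sb n - Qf S Sb (n-1))"

lemma int_shift_simps:
  "(n::int) + 1 + 1 = n + 2" "n + 1 + 2 = n + 3" "n + 2 + 1 = n + 3" "n + 1 - 1 = n" "n + 1 - 2 = n - 1"
  "n + 1 - 3 = n - 2" "n + 2 - 1 = n + 1" "n - 1 + 1 = n" "n - 1 + 2 = n + 1" "n - 1 - 1 = n - 2"
  "n - 1 - 2 = n - 3" "n - 2 + 1 = n - 1" "n - 2 - 1 = n - 3"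
  by simp_all

lemma evol_phi_compatibility:
  "Tphi S Sb v psi (n+1) - Tphi S Sb v psi n =
     (\<i>/2 * (psi (n+1) + psi (n-1))) *s Sb_evol S Sb v n
     + (\<i>/2 * (Tpsi S Sb v psi (n+1) + Tpsi S Sb v psi (n-1))) *s Sb n"
  unfolding Tphi_def Tpsi_def Sb_evol_def int_shift_simps
  by (simp add: vec_eq_iff field_simps)

lemma evol_chi_compatibility:
  "Tchi S Sb v psi (n+1) + Tchi S Sb v psi n =
     (\<i>/2 * (psi (n+1) + psi (n-1))) *s S_evol S Sb v n
     + (\<i>/2 * (Tpsi S Sb v psi (n+1) + Tpsi S Sb v psi (n-1))) *s S n"
  unfolding Tchi_def Tpsi_def S_evol_def int_shift_simps
  by (simp add: vec_eq_iff field_simps)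

lemma spatial_phi_chi_shifts:
  assumes sp: "spatial S Sb v lam psi phi chi"
  defines "c k \<equiv> \<i>/2 * (psi (k+1) + psi (k-1))"
  shows "phi (n+1) = phi n + c n *s Sb n"
    and "phi (n+2) = phi n + c n *s Sb n + c (n+1) *s Sb (n+1)"
    and "phi (n-1) = phi n - c (n-1) *s Sb (n-1)"
    and "phi (n-2) = phi n - c (n-1) *s Sb (n-1) - c (n-2) *s Sb (n-2)"
    and "chi (n+1) = c n *s S n - chi n"
    and "chi (n+2) = c (n+1) *s S (n+1) - c n *s S n + chi n"
    and "chi (n-1) = c (n-1) *s S (n-1) - chi n"
    and "chi (n-2) = c (n-2) *s S (n-2) - c (n-1) *s S (n-1) + chi n"
proof -
  have phi_step: "phi (k+1) = phi k + c k *s Sb k" for k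
  proof -
    have "phi (k+1) - phi k = c k *s Sb k"
      using sp unfolding spatial_def c_def by blast
    then show ?thesis by (simp add: algebra_simps)
  qed
  have chi_step: "chi (k+1) = c k *s S k - chi k" for k
  proof -
    have "chi (k+1) + chi k = c k *s S k"
      using sp unfolding spatial_def c_def by blast
    then show ?thesis by (simp add: algebra_simps)
  qed
  show "phi (n+1) = phi n + c n *s Sb n" "chi (n+1) = c n *s S n - chi n"
    by (fact phi_step chi_step)+
  show "phi (n+2) = phi n + c n *s Sb n + c (n+1) *s Sb (n+1)"
    using phi_step[of "n+1"] phi_step[of n] by (simp add: int_shift_simps)
  show "chi (n+2) = c (n+1) *s S (n+1) - c n *s S n + chi n"
    using chi_step[of "n+1"] chi_step[of n] by (simp add: int_shift_simps)
  show phi_pred: "phi (n-1) = phi n - c (n-1) *s Sb (n-1)"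
    using phi_step[of "n-1"] by (simp add: algebra_simps)
  show chi_pred: "chi (n-1) = c (n-1) *s S (n-1) - chi n"
    using chi_step[of "n-1"] by (simp add: algebra_simps)
  show "phi (n-2) = phi n - c (n-1) *s Sb (n-1) - c (n-2) *s Sb (n-2)"
    using phi_step[of "n-2"] phi_pred by (simp add: int_shift_simps algebra_simps)
  show "chi (n-2) = c (n-2) *s S (n-2) - c (n-1) *s S (n-1) + chi n"
    using chi_step[of "n-2"] chi_pred by (simp add: int_shift_simps algebra_simps)
qed

lemma spatial_lam_psi_shifts:
  assumes sp: "spatial S Sb v lam psi phi chi"
  defines "c k \<equiv> \<i>/2 * (psi (k+1) + psi (k-1))"
  shows "lam * psi (n+2) = v (n+2) * (psi (n+3) + psi (n+1)) + bil (S (n+2)) (phi n)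
           + c n * bil (S (n+2)) (Sb n) + c (n+1) * Qf S Sb (n+1)
           - c n * bil (S n) (Sb (n+2)) + bil (chi n) (Sb (n+2))"
    and "lam * psi (n+1) = v (n+1) * (psi (n+2) + psi n) + bil (S (n+1)) (phi n)
           + c n * Qf S Sb n - bil (chi n) (Sb (n+1))"
    and "lam * psi n = v n * (psi (n+1) + psi (n-1)) + bil (S n) (phi n) + bil (chi n) (Sb n)"
    and "lam * psi (n-1) = v (n-1) * (psi n + psi (n-2)) + bil (S (n-1)) (phi n)
           - bil (chi n) (Sb (n-1))"
    and "lam * psi (n-2) = v (n-2) * (psi (n-1) + psi (n-3)) + bil (S (n-2)) (phi n)
           - c (n-1) * Qf S Sb (n-2) + bil (chi n) (Sb (n-2))"
proof -
  have lam_psi: "lam * psi k = v k * (psi (k+1) + psi (k-1)) + bil (S k) (phi k) + bil (chi k) (Sb k)" for k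
  proof -
    have "v k * (psi (k+1) + psi (k-1)) = lam * psi k - bil (S k) (phi k) - bil (chi k) (Sb k)"
      using sp unfolding spatial_def by blast
    then show ?thesis by (simp add: algebra_simps)
  qed
  note shifts = spatial_phi_chi_shifts[OF sp, of n, folded c_def]
  show "lam * psi (n+2) = v (n+2) * (psi (n+3) + psi (n+1)) + bil (S (n+2)) (phi n)
           + c n * bil (S (n+2)) (Sb n) + c (n+1) * Qf S Sb (n+1)
           - c n * bil (S n) (Sb (n+2)) + bil (chi n) (Sb (n+2))"
    using lam_psi[of "n+2"] unfolding shifts Qf_def bil_linear int_shift_simps by (simp add: algebra_simps)
  show "lam * psi (n+1) = v (n+1) * (psi (n+2) + psi n) + bil (S (n+1)) (phi n)
           + c n * Qf S Sb n - bil (chi n) (Sb (n+1))"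
    using lam_psi[of "n+1"] unfolding shifts Qf_def bil_linear int_shift_simps by (simp add: algebra_simps)
  show "lam * psi n = v n * (psi (n+1) + psi (n-1)) + bil (S n) (phi n) + bil (chi n) (Sb n)"
    by (fact lam_psi)
  show "lam * psi (n-1) = v (n-1) * (psi n + psi (n-2)) + bil (S (n-1)) (phi n)
           - bil (chi n) (Sb (n-1))"
    using lam_psi[of "n-1"] unfolding shifts bil_linear int_shift_simps by (simp add: algebra_simps)
  show "lam * psi (n-2) = v (n-2) * (psi (n-1) + psi (n-3)) + bil (S (n-2)) (phi n)
           - c (n-1) * Qf S Sb (n-2) + bil (chi n) (Sb (n-2))"
    using lam_psi[of "n-2"] unfolding shifts Qf_def bil_linear int_shift_simps by (simp add: algebra_simps)
qed

lemma mult_Tpsi_expand: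
  "lam * Tpsi S Sb v psi n =
     v n * v (n+1) * (lam * psi (n+2) + lam * psi n) - v n * v (n-1) * (lam * psi n + lam * psi (n-2))
     + \<i>/2 * v n * (Qf S Sb n + Qf S Sb (n-1)) * (lam * psi (n+1) + lam * psi (n-1))"
  unfolding Tpsi_def by (simp add: algebra_simps)

lemma evol_psi_compatibility:
  assumes sp: "spatial S Sb v lam psi phi chi"
  shows "v_evol S Sb v n * (psi (n+1) + psi (n-1)) + v n * (Tpsi S Sb v psi (n+1) + Tpsi S Sb v psi (n-1))
     = lam * Tpsi S Sb v psi n - bil (S_evol S Sb v n) (phi n) - bil (S n) (Tphi S Sb v psi n)
       - bil (Tchi S Sb v psi n) (Sb n) - bil (chi n) (Sb_evol S Sb v n)"
  unfolding mult_Tpsi_expand spatial_lam_psi_shifts[OF sp, of n]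
  unfolding v_evol_def S_evol_def Sb_evol_def Tpsi_def Tphi_def Tchi_def Qf_def bil_linear int_shift_simps
  by (simp add: algebra_simps add_divide_distrib diff_divide_distrib power2_eq_square)

primrec iterate_up :: "(int \<Rightarrow> 'a \<Rightarrow> 'a) \<Rightarrow> int \<Rightarrow> 'a \<Rightarrow> nat \<Rightarrow> 'a" where
  "iterate_up F n0 x0 0 = x0"
| "iterate_up F n0 x0 (Suc j) = F (n0 + int j) (iterate_up F n0 x0 j)"

primrec iterate_down :: "(int \<Rightarrow> 'a \<Rightarrow> 'a) \<Rightarrow> int \<Rightarrow> 'a \<Rightarrow> nat \<Rightarrow> 'a" where
  "iterate_down B n0 x0 0 = x0"
| "iterate_down B n0 x0 (Suc j) = B (n0 - int j - 1) (iterate_down B n0 x0 j)"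

lemma int_recursion_exists:
  fixes F B :: "int \<Rightarrow> 'a \<Rightarrow> 'a"
  assumes FB: "\<And>k y. F k (B k y) = y"
  shows "\<exists>x. x n0 = x0 \<and> (\<forall>k. x (k+1) = F k (x k))"
proof -
  define x where "x k = (if n0 \<le> k then iterate_up F n0 x0 (nat (k - n0))
                          else iterate_down B n0 x0 (nat (n0 - k)))" for k
  have "x (k+1) = F k (x k)" for k
  proof (cases "n0 \<le> k")
    case True
    then have "nat (k + 1 - n0) = Suc (nat (k - n0))" by simp
    with True show ?thesis by (simp add: x_def)
  next
    case False
    define j where "j = nat (n0 - k - 1)"
    have "nat (n0 - k) = Suc j" and "n0 - int j - 1 = k" and "nat (n0 - (k+1)) = j"
      using False by (simp_all add: j_def)
    then have "x k = B k (iterate_down B n0 x0 j)"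
      using False by (simp add: x_def)
    moreover have "x (k+1) = iterate_down B n0 x0 j"
      using False \<open>nat (n0 - (k+1)) = j\<close> by (cases "k + 1 = n0") (simp_all add: x_def j_def)
    ultimately show ?thesis by (simp add: FB)
  qed
  moreover have "x n0 = x0" by (simp add: x_def)
  ultimately show ?thesis by blast
qed

lemma spatial_initial_value:
  fixes S Sb :: "int \<Rightarrow> complex ^ 'm" and v :: "int \<Rightarrow> complex"
  assumes vnz: "\<And>k. v k \<noteq> 0"
  shows "\<exists>psi phi chi. spatial S Sb v lam psi phi chi
           \<and> psi (n-1) = a \<and> psi n = b \<and> phi n = p \<and> chi n = q"
proof -
  define W where "W k p1 ph ch = (lam * p1 - bil (S k) ph - bil ch (Sb k)) / v k" for k p1 ph ch
  define F :: "int \<Rightarrow> complex \<times> complex \<times> (complex^'m) \<times> (complex^'m) \<Rightarrow> complex \<times> complex \<times> (complex^'m) \<times> (complex^'m)"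
    where "F k y = (case y of (p0, p1, ph, ch) \<Rightarrow>
       (p1, W k p1 ph ch - p0, ph + (\<i>/2 * W k p1 ph ch) *s Sb k, (\<i>/2 * W k p1 ph ch) *s S k - ch))" for k y
  \<comment> \<open>The backward step is explicit because \<open>bil (S k) (phi k) + bil (chi k) (Sb k)\<close>
     equals \<open>bil (S k) (phi (k+1)) - bil (chi (k+1)) (Sb k)\<close>.\<close>
  define WB where "WB k q0 ph ch = (lam * q0 - bil (S k) ph + bil ch (Sb k)) / v k" for k q0 ph ch
  define B :: "int \<Rightarrow> complex \<times> complex \<times> (complex^'m) \<times> (complex^'m) \<Rightarrow> complex \<times> complex \<times> (complex^'m) \<times> (complex^'m)"
    where "B k y = (case y of (q0, q1, ph, ch) \<Rightarrow>
       (WB k q0 ph ch - q1, q0, ph - (\<i>/2 * WB k q0 ph ch) *s Sb k, (\<i>/2 * WB k q0 ph ch) *s S k - ch))" for k y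
  have FB: "F k (B k y) = y" for k y
  proof -
    obtain q0 q1 ph ch where y: "y = (q0, q1, ph, ch)" by (cases y) auto
    define w where "w = WB k q0 ph ch"
    have "lam * q0 - bil (S k) (ph - (\<i>/2 * w) *s Sb k) - bil ((\<i>/2 * w) *s S k - ch) (Sb k)
            = lam * q0 - bil (S k) ph + bil ch (Sb k)"
      by (simp add: bil_linear algebra_simps)
    then have "W k q0 (ph - (\<i>/2 * w) *s Sb k) ((\<i>/2 * w) *s S k - ch) = w"
      by (simp add: W_def WB_def w_def)
    then show ?thesis unfolding y B_def F_def by (simp add: w_def[symmetric])
  qed
  obtain x where x0: "x n = (a, b, p, q)" and xs: "\<forall>k. x (k+1) = F k (x k)"
    using int_recursion_exists[of F B, OF FB] by blast
  define psi where "psi k = fst (snd (x k))" for k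
  define phi where "phi k = fst (snd (snd (x k)))" for k
  define chi where "chi k = snd (snd (snd (x k)))" for k
  have fst_x: "fst (x k) = psi (k - 1)" for k
    using xs[rule_format, of "k-1"] by (simp add: psi_def F_def split: prod.splits)
  have step: "psi (k+1) + psi (k-1) = W k (psi k) (phi k) (chi k)
      \<and> phi (k+1) = phi k + (\<i>/2 * W k (psi k) (phi k) (chi k)) *s Sb k
      \<and> chi (k+1) = (\<i>/2 * W k (psi k) (phi k) (chi k)) *s S k - chi k" for k
  proof -
    obtain p0 p1 ph ch where xk: "x k = (p0, p1, ph, ch)" by (cases "x k") auto
    have "p0 = psi (k-1)" using fst_x[of k] xk by simp
    then show ?thesis using xs[rule_format, of k] xk by (simp add: psi_def phi_def chi_def F_def)
  qed
  have "spatial S Sb v lam psi phi chi"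
    unfolding spatial_def
  proof (intro allI conjI)
    fix k
    show "v k * (psi (k + 1) + psi (k - 1)) = lam * psi k - bil (S k) (phi k) - bil (chi k) (Sb k)"
      using step[of k] vnz[of k] by (simp add: W_def)
    show "phi (k + 1) - phi k = (\<i> / 2 * (psi (k + 1) + psi (k - 1))) *s Sb k"
      using step[of k] by simp
    show "chi (k + 1) + chi k = (\<i> / 2 * (psi (k + 1) + psi (k - 1))) *s S k"
      using step[of k] by simp
  qed
  moreover have "psi (n-1) = a \<and> psi n = b \<and> phi n = p \<and> chi n = q"
    using fst_x[of n] x0 by (simp add: psi_def phi_def chi_def)
  ultimately show ?thesis by blast
qed

lemma compatible_iff_evolution:
  fixes S Sb S' Sb' :: "int \<Rightarrow> complex ^ 'm" and v v' :: "int \<Rightarrow> complex"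
  assumes vnz: "\<And>n. v n \<noteq> 0"
  shows "compatible S Sb v S' Sb' v' \<longleftrightarrow>
           S' = S_evol S Sb v \<and> Sb' = Sb_evol S Sb v \<and> v' = v_evol S Sb v"
proof
  assume comp: "compatible S Sb v S' Sb' v'"
  have "S' n = S_evol S Sb v n \<and> Sb' n = Sb_evol S Sb v n \<and> v' n = v_evol S Sb v n" for n
  proof -
    have "\<exists>psi phi chi. spatial S Sb v 1 psi phi chi
            \<and> psi (n-1) = 0 \<and> psi n = 1 \<and> phi n = 0 \<and> chi n = 0"
      using vnz by (rule spatial_initial_value)
    then obtain psi phi chi where sp: "spatial S Sb v 1 psi phi chi"
      and init: "psi (n-1) = 0" "psi n = 1" "phi n = 0" "chi n = 0"
      by blast
    define u where "u = psi (n+1) + psi (n-1)"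
    have "v n * u = 1 * psi n - bil (S n) (phi n) - bil (chi n) (Sb n)"
      using sp unfolding spatial_def u_def by blast
    then have "v n * u = 1" using init by simp
    then have u_nz: "u \<noteq> 0" by auto
    note eqs = comp[unfolded compatible_def Let_def, rule_format, OF sp, of n, folded u_def]
    have S': "S' n = S_evol S Sb v n"
      using eqs evol_chi_compatibility[of S Sb v psi n, folded u_def] u_nz by simp
    have Sb': "Sb' n = Sb_evol S Sb v n"
      using eqs evol_phi_compatibility[of S Sb v psi n, folded u_def] u_nz by simp
    have "v' n * u = v_evol S Sb v n * u"
      using conjunct1[OF eqs] evol_psi_compatibility[OF sp, of n, folded u_def]
      unfolding S' Sb' by (metis mult_1 add_right_cancel)
    with u_nz show ?thesis using S' Sb' by simp
  qed
  then show "S' = S_evol S Sb v \<and> Sb' = Sb_evol S Sb v \<and> v' = v_evol S Sb v"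
    by auto
next
  assume "S' = S_evol S Sb v \<and> Sb' = Sb_evol S Sb v \<and> v' = v_evol S Sb v"
  then show "compatible S Sb v S' Sb' v'"
    unfolding compatible_def Let_def
    by (auto simp: evol_psi_compatibility evol_phi_compatibility evol_chi_compatibility)
qed

text \<open>Compatibility is an algebraic condition at each instant.\<close>
theorem proposition2p2:
  fixes S Sb S' Sb' :: "int \<Rightarrow> real \<Rightarrow> complex ^ 'm"
    and v v' :: "int \<Rightarrow> real \<Rightarrow> complex"
  assumes dS: "\<And>n t. (S n has_vector_derivative S' n t) (at t)"
    and dSb: "\<And>n t. (Sb n has_vector_derivative Sb' n t) (at t)"
    and dv: "\<And>n t. (v n has_vector_derivative v' n t) (at t)"
    and vnz: "\<And>n t. v n t \<noteq> 0"
  shows "(\<forall>t. compatible (\<lambda>n. S n t) (\<lambda>n. Sb n t) (\<lambda>n. v n t)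
                         (\<lambda>n. S' n t) (\<lambda>n. Sb' n t) (\<lambda>n. v' n t))
     \<longleftrightarrow>
     (\<forall>n t.
        let Q = Qf (\<lambda>k. S k t) (\<lambda>k. Sb k t); V = (\<lambda>k. v k t);
            s = (\<lambda>k. S k t); sb = (\<lambda>k. Sb k t) in
        S' n t = (V n * V (n+1)) *s (s (n+2) + s n) - (V n * V (n-1)) *s (s n + s (n-2))
                 + (\<i>/2 * V n * (Q n + Q (n-1))) *s (s (n+1) + s (n-1))
      \<and> Sb' n t = (V n * V (n+1)) *s (sb (n+2) + sb n) - (V n * V (n-1)) *s (sb n + sb (n-2))
                 - (\<i>/2 * V n * (Q n + Q (n-1))) *s (sb (n+1) + sb (n-1))
      \<and> v' n t = 2 * (V n)^2 * (V (n+1) - V (n-1))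
                 + \<i>/2 * V n * V (n+1) * (bil (s (n+2)) (sb n) - bil (s n) (sb (n+2)))
                 - \<i>/2 * V n * V (n-1) * (bil (s n) (sb (n-2)) - bil (s (n-2)) (sb n))
                 - 1/4 * V n * (Q n + Q (n-1)) * (Q n - Q (n-1)))"
proof -
  have "compatible (\<lambda>n. S n t) (\<lambda>n. Sb n t) (\<lambda>n. v n t) (\<lambda>n. S' n t) (\<lambda>n. Sb' n t) (\<lambda>n. v' n t)
        \<longleftrightarrow> (\<forall>n. S' n t = S_evol (\<lambda>k. S k t) (\<lambda>k. Sb k t) (\<lambda>k. v k t) n
              \<and> Sb' n t = Sb_evol (\<lambda>k. S k t) (\<lambda>k. Sb k t) (\<lambda>k. v k t) n
              \<and> v' n t = v_evol (\<lambda>k. S k t) (\<lambda>k. Sb k t) (\<lambda>k. v k t) n)" for t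
    by (subst compatible_iff_evolution) (auto simp: vnz fun_eq_iff)
  then show ?thesis
    unfolding S_evol_def Sb_evol_def v_evol_def Let_def by blast
qed

end
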